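(* Let $n\ge 5$, $k\in\{2,\dots,n-2\}$, and let $P,Q$ be generic planar $n$-gons such that $Q$ is inscribed in $P$ and $T_k(Q)$ is inscribed in $T_k(P)$. Then $T_k^2(Q)$ is inscribed in $T_k^2(P)$, and consequently $T_k^m(Q)$ is inscribed in $T_k^m(P)$ for every $m\ge 1$.
   Context: For an $n$-gon $P=(P_i)_{i\in\mathbb Z/n}$ in the projective plane and $k\in\{2,\dots,n-2\}$, the $k$-diagonal pentagram map is $T_k(P)=P'$ with $P'_i=P_iP_{i+k}\cap P_{i+1}P_{i+k+1}$ (here $XY$ is the line through $X,Y$). For $k=2$ this is Schwartz's pentagram map. A polygon $Q$ with the same number of vertices as $P$ is inscribed in $P$ if $Q_i$ lies on the line $P_iP_{i+1}$ for all $i$. "Generic" means that all iterates considered are well defined. *)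

theory Defs
  imports "HOL-Analysis.Analysis" "HOL-Analysis.Cross3"
begin

text \<open>Real projective plane in homogeneous coordinates: a point (or a line) is
represented by a nonzero vector of real^3, up to nonzero scalar multiples.
The line through X and Y is the cross product X x Y (zero iff X, Y coincide
projectively or one of them is undefined); the intersection of two lines L, M
is L x M (zero iff the lines coincide or one is undefined).\<close>

definition join :: "real^3 \<Rightarrow> real^3 \<Rightarrow> real^3" where
  "join X Y = cross3 X Y"

definition meet :: "real^3 \<Rightarrow> real^3 \<Rightarrow> real^3" where
  "meet L M = cross3 L M"

definition incident :: "real^3 \<Rightarrow> real^3 \<Rightarrow> bool" where
  "incident X L \<longleftrightarrow> L \<bullet> X = 0"

definition ngon :: "nat \<Rightarrow> (nat \<Rightarrow> real^3) \<Rightarrow> bool" where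
  "ngon n P \<longleftrightarrow> (\<forall>i. P (i + n) = P i)"

definition Tk :: "nat \<Rightarrow> (nat \<Rightarrow> real^3) \<Rightarrow> (nat \<Rightarrow> real^3)" where
  "Tk k P i = meet (join (P i) (P (i + k))) (join (P (Suc i)) (P (Suc (i + k))))"

definition inscribed :: "(nat \<Rightarrow> real^3) \<Rightarrow> (nat \<Rightarrow> real^3) \<Rightarrow> bool" where
  "inscribed Q P \<longleftrightarrow> (\<forall>i. incident (Q i) (join (P i) (P (Suc i))))"

text \<open>Generic: all iterates are well defined, i.e. every vertex of every iterate
is a genuine projective point, and consecutive vertices are distinct (so the
side lines used in the notion of inscribed polygon are defined).\<close>
definition generic :: "nat \<Rightarrow> (nat \<Rightarrow> real^3) \<Rightarrow> bool" where
  "generic k P \<longleftrightarrow> (\<forall>m i. (Tk k ^^ m) P i \<noteq> 0 \<and>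
      join ((Tk k ^^ m) P i) ((Tk k ^^ m) P (Suc i)) \<noteq> 0)"

end

(*
  Consecutive vertices T(P)_j, T(P)_(j+1) of T = T_k both lie on the diagonal P_(j+1) P_(j+1+k),
  so "T(Q) inscribed in T(P)" says that T(Q)_j lies on that diagonal. For the next step put
  a, b, c, e = T(Q)_i, T(Q)_(i+1), T(Q)_(i+k), T(Q)_(i+k+1) and U, V = T(P)_(i+1), T(P)_(i+1+k);
  we must show that T^2(Q)_i = ac \<inter> be lies on UV. The corresponding sides of the triangles
  U a b and V c e meet in X = P_(i+1+k), Y = P_(i+2+k) and r = Q_(i+1+k), which are collinear
  because Q is inscribed in P. By Desargues' theorem the lines UV, ac, be are concurrent.
*)

theory Submission
  imports Defs
begin

context includes cross3_syntax
begin

lemma cross_eq_0_scaleR: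
  fixes x y :: "real^3"
  assumes "x \<times> y = 0" "y \<noteq> 0"
  obtains t where "x = t *\<^sub>R y"
proof
  have "(y \<bullet> y) *\<^sub>R x = (y \<bullet> x) *\<^sub>R y"
    using Lagrange[of y x y] assms(1) by simp
  moreover have "y \<bullet> y \<noteq> 0"
    using assms(2) by simp
  ultimately show "x = ((y \<bullet> x) / (y \<bullet> y)) *\<^sub>R y"
    by (metis real_vector.scale_left_imp_eq scaleR_scaleR nonzero_mult_div_cancel_left
        times_divide_eq_right)
qed

lemma cross_eq_0_commute:
  fixes x y :: "real^3"
  shows "x \<times> y = 0 \<longleftrightarrow> y \<times> x = 0"
  by (metis cross_skew neg_equal_0_iff_equal)

lemma cross_eq_0_inner_eq_0:
  fixes x y w :: "real^3"
  assumes "x \<times> y = 0" "y \<noteq> 0" "y \<bullet> w = 0"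
  shows "x \<bullet> w = 0"
  using assms by (metis cross_eq_0_scaleR inner_scaleR_left mult_zero_right)

lemma cross_eq_0_trans:
  fixes x y z :: "real^3"
  assumes "x \<times> z = 0" "y \<times> z = 0" "z \<noteq> 0"
  shows "x \<times> y = 0"
  using assms by (metis cross_eq_0_scaleR cross_mult_left cross_mult_right cross_refl scale_eq_0_iff)

lemma cross_scaleR_if_orthogonal:
  fixes x y p :: "real^3"
  assumes "x \<bullet> p = 0" "y \<bullet> p = 0" "p \<noteq> 0"
  obtains t where "x \<times> y = t *\<^sub>R p"
proof -
  have "p \<times> (x \<times> y) = 0"
    using assms(1,2) by (simp add: Lagrange inner_commute)
  then have "(x \<times> y) \<times> p = 0"
    by (simp add: cross_eq_0_commute)
  then show ?thesis
    using that cross_eq_0_scaleR assms(3) by blast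
qed

lemma cross_eq_0_if_orthogonal_both:
  fixes x y p q :: "real^3"
  assumes "x \<bullet> p = 0" "x \<bullet> q = 0" "y \<bullet> p = 0" "y \<bullet> q = 0" "p \<times> q \<noteq> 0"
  shows "x \<times> y = 0"
proof -
  have "x \<times> (p \<times> q) = 0" "y \<times> (p \<times> q) = 0"
    using assms by (simp_all add: Lagrange)
  then show ?thesis
    using cross_eq_0_trans assms(5) by blast
qed

lemma inner_cross_eq_0_if_orthogonal:
  fixes x y z p :: "real^3"
  assumes "x \<bullet> p = 0" "y \<bullet> p = 0" "z \<bullet> p = 0" "p \<noteq> 0"
  shows "(x \<times> y) \<bullet> z = 0"
proof -
  obtain t where "x \<times> y = t *\<^sub>R p"
    using cross_scaleR_if_orthogonal assms(1,2,4) .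
  then show ?thesis
    using assms(3) by (simp add: inner_commute)
qed

lemma orthogonal_if_inner_cross_eq_0:
  fixes x y z l :: "real^3"
  assumes "x \<bullet> (y \<times> z) = 0" "y \<times> z \<noteq> 0" "y \<bullet> l = 0" "z \<bullet> l = 0" "l \<noteq> 0"
  shows "x \<bullet> l = 0"
proof -
  obtain t where t: "y \<times> z = t *\<^sub>R l"
    using cross_scaleR_if_orthogonal assms(3-5) .
  then have "t \<noteq> 0"
    using assms(2) by auto
  then show ?thesis
    using assms(1) unfolding t by simp
qed

lemma cross_cross_expand:
  fixes w x y z :: "real^3"
  shows "(w \<times> x) \<times> (y \<times> z) = (w \<bullet> (x \<times> z)) *\<^sub>R y - (w \<bullet> (x \<times> y)) *\<^sub>R z"
  by (simp add: cross_cross_det dot_cross_det)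

lemma cross_cross_shared:
  fixes w x z :: "real^3"
  shows "(w \<times> x) \<times> (x \<times> z) = (w \<bullet> (x \<times> z)) *\<^sub>R x"
  using cross_cross_expand[of w x x z] by simp

lemma desargues_identity:
  fixes u1 u2 u3 v1 v2 v3 :: "real^3"
  shows "((u1 \<times> u2) \<times> (v1 \<times> v2)) \<bullet> (((u1 \<times> u3) \<times> (v1 \<times> v3)) \<times> ((u2 \<times> u3) \<times> (v2 \<times> v3)))
    = - (u1 \<bullet> (u2 \<times> u3)) * (v1 \<bullet> (v2 \<times> v3)) * ((u1 \<times> v1) \<bullet> ((u2 \<times> v2) \<times> (u3 \<times> v3)))"
proof -
  have triple: "((a1 *\<^sub>R v1 - b1 *\<^sub>R v2) \<bullet> ((a2 *\<^sub>R v1 - b2 *\<^sub>R v3) \<times> (a3 *\<^sub>R v2 - b3 *\<^sub>R v3)))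
      = (a1 * b2 * a3 - b1 * a2 * b3) * (v1 \<bullet> (v2 \<times> v3))" for a1 a2 a3 b1 b2 b3
    unfolding cross3_def inner_vec_def sum_3 vector_def by simp algebra
  have coeff: "(u1 \<bullet> (u2 \<times> v2)) * (u1 \<bullet> (u3 \<times> v1)) * (u2 \<bullet> (u3 \<times> v3))
      - (u1 \<bullet> (u2 \<times> v1)) * (u1 \<bullet> (u3 \<times> v3)) * (u2 \<bullet> (u3 \<times> v2))
      = - (u1 \<bullet> (u2 \<times> u3)) * ((u1 \<times> v1) \<bullet> ((u2 \<times> v2) \<times> (u3 \<times> v3)))"
    unfolding cross3_def inner_vec_def sum_3 vector_def by simp algebra
  show ?thesis
    unfolding cross_cross_expand triple coeff by (simp add: algebra_simps)
qed

lemma desargues: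
  fixes u1 u2 u3 v1 v2 v3 :: "real^3"
  assumes "u1 \<bullet> (u2 \<times> u3) \<noteq> 0" "v1 \<bullet> (v2 \<times> v3) \<noteq> 0"
    and "((u1 \<times> u2) \<times> (v1 \<times> v2)) \<bullet> (((u1 \<times> u3) \<times> (v1 \<times> v3)) \<times> ((u2 \<times> u3) \<times> (v2 \<times> v3))) = 0"
  shows "(u1 \<times> v1) \<bullet> ((u2 \<times> v2) \<times> (u3 \<times> v3)) = 0"
  using assms unfolding desargues_identity by simp

lemma line_through_meet_cases:
  fixes a b l d1 d2 :: "real^3"
  assumes "(d1 \<times> d2) \<bullet> (a \<times> b) = 0" "a \<bullet> l = 0" "b \<bullet> l = 0" "a \<bullet> d1 = 0" "b \<bullet> d2 = 0"
    and "d1 \<times> d2 \<noteq> 0" "a \<times> b \<noteq> 0" "l \<noteq> 0"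
  shows "l \<times> d1 = 0 \<or> l \<times> d2 = 0"
proof (rule ccontr)
  define U where "U = d1 \<times> d2"
  have U: "U \<bullet> d1 = 0" "U \<bullet> d2 = 0" "U \<noteq> 0"
    using assms(6) by (simp_all add: U_def dot_cross_self inner_commute)
  have "U \<bullet> l = 0"
    using orthogonal_if_inner_cross_eq_0 assms(1-3,7,8) by (simp add: U_def)
  moreover assume "\<not> (l \<times> d1 = 0 \<or> l \<times> d2 = 0)"
  ultimately have "a \<times> U = 0" "b \<times> U = 0"
    using cross_eq_0_if_orthogonal_both[of a l d1 U] cross_eq_0_if_orthogonal_both[of b l d2 U]
      assms(2-5) U by auto
  then show False
    using cross_eq_0_trans \<open>U \<noteq> 0\<close> assms(7) by blast
qed

lemma perspective_configuration_degenerate: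
  fixes X Y r a b c e d1 d2 d3 d4 l m :: "real^3"
  assumes X: "X \<bullet> d1 = 0" "X \<bullet> d3 = 0" and Y: "Y \<bullet> d2 = 0" "Y \<bullet> d4 = 0"
    and r: "r \<bullet> (X \<times> Y) = 0" "r \<bullet> l = 0" "r \<bullet> m = 0"
    and a: "a \<bullet> d1 = 0" and b: "b \<bullet> l = 0" "b \<bullet> d2 = 0"
    and c: "c \<bullet> m = 0" "c \<bullet> d3 = 0" and e: "e \<bullet> m = 0" "e \<bullet> d4 = 0"
    and U: "d1 \<times> d2 \<noteq> 0" and V: "d3 \<times> d4 \<noteq> 0"
    and nonzero: "X \<noteq> 0" "X \<times> Y \<noteq> 0" "r \<noteq> 0" "l \<noteq> 0" "m \<noteq> 0"
    and l_d1: "l \<times> d1 = 0"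
  shows "((a \<times> c) \<times> (b \<times> e)) \<bullet> ((d1 \<times> d2) \<times> (d3 \<times> d4)) = 0"
proof -
  define U V where "U = d1 \<times> d2" and "V = d3 \<times> d4"
  have "U \<noteq> 0" "V \<noteq> 0" "d1 \<noteq> 0" "d4 \<noteq> 0" "Y \<noteq> 0"
    using U V nonzero(2) by (auto simp: U_def V_def)
  have on_UV: "U \<bullet> d1 = 0" "U \<bullet> d2 = 0" "V \<bullet> d3 = 0" "V \<bullet> d4 = 0"
    by (simp_all add: U_def V_def dot_cross_self inner_commute)
  have "b \<bullet> d1 = 0"
    using cross_eq_0_inner_eq_0[of d1 l b] l_d1 b(1) \<open>l \<noteq> 0\<close>
    by (simp add: cross_eq_0_commute inner_commute)
  then have "b \<times> U = 0"
    using cross_eq_0_if_orthogonal_both b(2) on_UV U by (simp add: U_def)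
  then obtain t where b: "b = t *\<^sub>R U"
    using cross_eq_0_scaleR \<open>U \<noteq> 0\<close> by blast
  have "r \<bullet> d1 = 0"
    using cross_eq_0_inner_eq_0[of d1 l r] l_d1 r(2) \<open>l \<noteq> 0\<close>
    by (simp add: cross_eq_0_commute inner_commute)
  \<comment> \<open>b is the vertex U, so it suffices that U lies on ac or on eV\<close>
  have "(a \<times> c) \<bullet> U = 0 \<or> (U \<times> e) \<bullet> V = 0"
  proof (cases "d1 \<times> (X \<times> Y) = 0")
    case True
    then have "Y \<bullet> d1 = 0"
      using cross_eq_0_inner_eq_0[of d1 "X \<times> Y" Y] nonzero(2)
      by (simp add: dot_cross_self inner_commute)
    then have "U \<times> Y = 0"
      using cross_eq_0_if_orthogonal_both Y(1) on_UV U by (simp add: U_def)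
    then have "U \<bullet> d4 = 0"
      using cross_eq_0_inner_eq_0[of U Y d4] Y(2) \<open>Y \<noteq> 0\<close> by (simp add: inner_commute)
    then show ?thesis
      using inner_cross_eq_0_if_orthogonal[of U d4 e V] e(2) on_UV(4) \<open>d4 \<noteq> 0\<close> by simp
  next
    case False
    then have "r \<times> X = 0"
      using cross_eq_0_if_orthogonal_both \<open>r \<bullet> d1 = 0\<close> r(1) X(1)
      by (simp add: dot_cross_self)
    then have "X \<bullet> m = 0"
      using cross_eq_0_inner_eq_0[of X r m] r(3) nonzero(3) by (simp add: cross_eq_0_commute)
    show ?thesis
    proof (cases "m \<times> d3 = 0")
      case True
      then have "e \<bullet> d3 = 0"
        using cross_eq_0_inner_eq_0[of d3 m e] e(1) nonzero(5)
        by (simp add: cross_eq_0_commute inner_commute)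
      then have "e \<times> V = 0"
        using cross_eq_0_if_orthogonal_both e(2) on_UV V by (simp add: V_def)
      then obtain s where "e = s *\<^sub>R V"
        using cross_eq_0_scaleR \<open>V \<noteq> 0\<close> by blast
      then show ?thesis
        by (simp add: cross_mult_right dot_cross_self)
    next
      case False
      then have "c \<times> X = 0"
        using cross_eq_0_if_orthogonal_both[of c m d3 X] c \<open>X \<bullet> m = 0\<close> X(2) by simp
      then have "c \<bullet> d1 = 0"
        using cross_eq_0_inner_eq_0[of c X d1] X(1) nonzero(1) by (simp add: inner_commute)
      then show ?thesis
        using inner_cross_eq_0_if_orthogonal[of a d1 c U] a on_UV(1) \<open>d1 \<noteq> 0\<close> by simp
    qed
  qed
  then show ?thesis
    unfolding U_def[symmetric] V_def[symmetric] b dot_cross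
    by (auto simp: cross_mult_left dot_cross_self)
qed

lemma perspective_configuration_collinear:
  fixes X Y r a b c e d1 d2 d3 d4 l m :: "real^3"
  assumes X: "X \<bullet> d1 = 0" "X \<bullet> d3 = 0" and Y: "Y \<bullet> d2 = 0" "Y \<bullet> d4 = 0"
    and r: "r \<bullet> (X \<times> Y) = 0" "r \<bullet> l = 0" "r \<bullet> m = 0"
    and a: "a \<bullet> l = 0" "a \<bullet> d1 = 0" and b: "b \<bullet> l = 0" "b \<bullet> d2 = 0"
    and c: "c \<bullet> m = 0" "c \<bullet> d3 = 0" and e: "e \<bullet> m = 0" "e \<bullet> d4 = 0"
    and U: "d1 \<times> d2 \<noteq> 0" and V: "d3 \<times> d4 \<noteq> 0" and ab: "a \<times> b \<noteq> 0"
    and nonzero: "X \<noteq> 0" "X \<times> Y \<noteq> 0" "r \<noteq> 0" "l \<noteq> 0" "m \<noteq> 0"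
    and collinear: "(d1 \<times> d2) \<bullet> (a \<times> b) = 0"
  shows "((a \<times> c) \<times> (b \<times> e)) \<bullet> ((d1 \<times> d2) \<times> (d3 \<times> d4)) = 0"
proof -
  consider "l \<times> d1 = 0" | "l \<times> d2 = 0"
    using line_through_meet_cases collinear a b U ab nonzero(4) by blast
  then show ?thesis
  proof cases
    case 1
    then show ?thesis
      using perspective_configuration_degenerate X Y r a(2) b c e U V nonzero by blast
  next
    case 2
    \<comment> \<open>exchange the roles of d1, X, a, c and d2, Y, b, e\<close>
    have "r \<bullet> (Y \<times> X) = 0" "Y \<noteq> 0" "Y \<times> X \<noteq> 0"
      using r(1) nonzero(2) cross_skew[of Y X] by auto
    moreover have "((b \<times> e) \<times> (a \<times> c)) \<bullet> ((d2 \<times> d1) \<times> (d4 \<times> d3))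
        = - (((a \<times> c) \<times> (b \<times> e)) \<bullet> ((d1 \<times> d2) \<times> (d3 \<times> d4)))"
      using cross_skew[of "b \<times> e" "a \<times> c"] cross_skew[of d2 d1] cross_skew[of d4 d3] by simp
    ultimately show ?thesis
      using perspective_configuration_degenerate[of Y d2 d4 X d1 d3 r l m b a e c] 2
        X Y r(2,3) a b c e U V nonzero(3-5)
      by (simp add: cross_eq_0_commute[of d2 d1] cross_eq_0_commute[of d4 d3])
  qed
qed

lemma perspective_configuration_nondegenerate:
  fixes X Y r a b c e d1 d2 d3 d4 l m :: "real^3"
  assumes X: "X \<bullet> d1 = 0" "X \<bullet> d3 = 0" and Y: "Y \<bullet> d2 = 0" "Y \<bullet> d4 = 0"
    and r: "r \<bullet> (X \<times> Y) = 0" "r \<bullet> l = 0" "r \<bullet> m = 0"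
    and a: "a \<bullet> l = 0" "a \<bullet> d1 = 0" and b: "b \<bullet> l = 0" "b \<bullet> d2 = 0"
    and c: "c \<bullet> m = 0" "c \<bullet> d3 = 0" and e: "e \<bullet> m = 0" "e \<bullet> d4 = 0"
    and U: "d1 \<times> d2 \<noteq> 0" and V: "d3 \<times> d4 \<noteq> 0"
    and nonzero: "X \<noteq> 0" "X \<times> Y \<noteq> 0" "r \<noteq> 0" "l \<noteq> 0" "m \<noteq> 0"
    and triangles: "(d1 \<times> d2) \<bullet> (a \<times> b) \<noteq> 0" "(d3 \<times> d4) \<bullet> (c \<times> e) \<noteq> 0"
  shows "((a \<times> c) \<times> (b \<times> e)) \<bullet> ((d1 \<times> d2) \<times> (d3 \<times> d4)) = 0"
proof -
  define U V where "U = d1 \<times> d2" and "V = d3 \<times> d4"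
  have on_UV: "U \<bullet> d1 = 0" "U \<bullet> d2 = 0" "V \<bullet> d3 = 0" "V \<bullet> d4 = 0"
    by (simp_all add: U_def V_def dot_cross_self inner_commute)
  have "d1 \<noteq> 0" "d2 \<noteq> 0" "d3 \<noteq> 0" "d4 \<noteq> 0" "Y \<noteq> 0"
    using U V nonzero(2) by auto
  \<comment> \<open>the sides of the triangles U a b and V c e meet in X, Y and r\<close>
  obtain t1 t2 t3 t4 where
    "U \<times> a = t1 *\<^sub>R d1" "V \<times> c = t2 *\<^sub>R d3" "U \<times> b = t3 *\<^sub>R d2" "V \<times> e = t4 *\<^sub>R d4"
    using cross_scaleR_if_orthogonal on_UV a(2) b(2) c(2) e(2)
      \<open>d1 \<noteq> 0\<close> \<open>d2 \<noteq> 0\<close> \<open>d3 \<noteq> 0\<close> \<open>d4 \<noteq> 0\<close> by metis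
  moreover obtain t5 t6 where "a \<times> b = t5 *\<^sub>R l" "c \<times> e = t6 *\<^sub>R m"
    using cross_scaleR_if_orthogonal a(1) b(1) c(1) e(1) nonzero(4,5) by metis
  moreover obtain k1 k2 k3 where "d1 \<times> d3 = k1 *\<^sub>R X" "d2 \<times> d4 = k2 *\<^sub>R Y" "l \<times> m = k3 *\<^sub>R r"
    using cross_scaleR_if_orthogonal X Y r(2,3) nonzero(1,3) \<open>Y \<noteq> 0\<close>
    by (metis inner_commute)
  moreover have "X \<bullet> (Y \<times> r) = 0"
    using r(1) by (metis cross_triple inner_commute)
  ultimately have "((U \<times> a) \<times> (V \<times> c)) \<bullet> (((U \<times> b) \<times> (V \<times> e)) \<times> ((a \<times> b) \<times> (c \<times> e))) = 0"
    by (simp add: cross_mult_left cross_mult_right)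
  then have "(U \<times> V) \<bullet> ((a \<times> c) \<times> (b \<times> e)) = 0"
    using desargues[of U a b V c e] triangles by (simp add: U_def V_def)
  then show ?thesis
    by (simp add: U_def V_def inner_commute)
qed

lemma perspective_configuration:
  fixes X Y r a b c e d1 d2 d3 d4 l m :: "real^3"
  assumes X: "X \<bullet> d1 = 0" "X \<bullet> d3 = 0" and Y: "Y \<bullet> d2 = 0" "Y \<bullet> d4 = 0"
    and r: "r \<bullet> (X \<times> Y) = 0" "r \<bullet> l = 0" "r \<bullet> m = 0"
    and a: "a \<bullet> l = 0" "a \<bullet> d1 = 0" and b: "b \<bullet> l = 0" "b \<bullet> d2 = 0"
    and c: "c \<bullet> m = 0" "c \<bullet> d3 = 0" and e: "e \<bullet> m = 0" "e \<bullet> d4 = 0"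
    and U: "d1 \<times> d2 \<noteq> 0" and V: "d3 \<times> d4 \<noteq> 0" and ab: "a \<times> b \<noteq> 0" and ce: "c \<times> e \<noteq> 0"
    and nonzero: "X \<noteq> 0" "X \<times> Y \<noteq> 0" "r \<noteq> 0" "l \<noteq> 0" "m \<noteq> 0"
  shows "((a \<times> c) \<times> (b \<times> e)) \<bullet> ((d1 \<times> d2) \<times> (d3 \<times> d4)) = 0"
proof (cases "(d1 \<times> d2) \<bullet> (a \<times> b) = 0")
  case True
  then show ?thesis
    using perspective_configuration_collinear assms by blast
next
  case False
  show ?thesis
  proof (cases "(d3 \<times> d4) \<bullet> (c \<times> e) = 0")
    case True
    \<comment> \<open>exchange the roles of the two triangles\<close>
    have "((c \<times> a) \<times> (e \<times> b)) \<bullet> ((d3 \<times> d4) \<times> (d1 \<times> d2))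
        = - (((a \<times> c) \<times> (b \<times> e)) \<bullet> ((d1 \<times> d2) \<times> (d3 \<times> d4)))"
      using cross_skew[of c a] cross_skew[of e b] cross_skew[of "d3 \<times> d4" "d1 \<times> d2"] by simp
    then show ?thesis
      using perspective_configuration_collinear[of X d3 d1 Y d4 d2 r m l c e a b] True
        X Y r a b c e U V ce nonzero by simp
  next
    case False
    then show ?thesis
      using perspective_configuration_nondegenerate X Y r a b c e U V nonzero
        \<open>(d1 \<times> d2) \<bullet> (a \<times> b) \<noteq> 0\<close> by blast
  qed
qed

lemma Tk_cross: "Tk k P i = (P i \<times> P (i + k)) \<times> (P (Suc i) \<times> P (Suc i + k))"
  by (simp add: Tk_def meet_def join_def)

lemma join_Tk:
  "join (Tk k P i) (Tk k P (Suc i))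
    = ((P i \<times> P (i + k)) \<bullet> ((P (Suc i) \<times> P (Suc i + k)) \<times> (P (Suc (Suc i)) \<times> P (Suc (Suc i) + k))))
      *\<^sub>R (P (Suc i) \<times> P (Suc i + k))"
  unfolding join_def Tk_cross cross_cross_shared ..

lemma inscribed_Tk_iff:
  assumes "\<And>i. join (Tk k P i) (Tk k P (Suc i)) \<noteq> 0"
  shows "inscribed R (Tk k P) \<longleftrightarrow> (\<forall>i. incident (R i) (join (P (Suc i)) (P (Suc i + k))))"
  using assms unfolding inscribed_def incident_def join_Tk by (simp add: join_def)

lemma generic_Tk: "generic k P \<Longrightarrow> generic k (Tk k P)"
  unfolding generic_def by (metis funpow_Suc_right o_apply)

lemma generic_funpow_Tk: "generic k P \<Longrightarrow> generic k ((Tk k ^^ m) P)"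
  by (induction m) (simp_all add: generic_Tk)

lemma generic_nonzero:
  assumes "generic k P"
  shows "P i \<noteq> 0" "join (P i) (P (Suc i)) \<noteq> 0"
  using assms unfolding generic_def by (metis funpow_0)+

lemma Tk_Tk_on_diagonal:
  assumes P: "generic k P" and Q: "generic k Q" and QP: "inscribed Q P"
    and TQP: "\<And>j. incident (Tk k Q j) (join (P (Suc j)) (P (Suc j + k)))"
  shows "incident (Tk k (Tk k Q) i) (join (Tk k P (Suc i)) (Tk k P (Suc i + k)))"
proof -
  note TP = generic_nonzero[OF generic_Tk[OF P]] and TQ = generic_nonzero[OF generic_Tk[OF Q]]
  define a b c e where "a = Tk k Q i" and "b = Tk k Q (Suc i)" and "c = Tk k Q (i + k)"
    and "e = Tk k Q (Suc i + k)"
  define l m where "l = Q (Suc i) \<times> Q (Suc i + k)" and "m = Q (Suc i + k) \<times> Q (Suc i + k + k)"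
  define d1 d2 d3 d4 where "d1 = P (Suc i) \<times> P (Suc i + k)"
    and "d2 = P (Suc (Suc i)) \<times> P (Suc (Suc i) + k)" and "d3 = P (Suc i + k) \<times> P (Suc i + k + k)"
    and "d4 = P (Suc (Suc i + k)) \<times> P (Suc (Suc i + k) + k)"
  have abce: "a = (Q i \<times> Q (i + k)) \<times> l" "b = l \<times> (Q (Suc (Suc i)) \<times> Q (Suc (Suc i) + k))"
    "c = (Q (i + k) \<times> Q (i + k + k)) \<times> m" "e = m \<times> (Q (Suc (Suc i + k)) \<times> Q (Suc (Suc i + k) + k))"
    unfolding a_def b_def c_def e_def l_def m_def Tk_cross by simp_all
  have "((a \<times> c) \<times> (b \<times> e)) \<bullet> ((d1 \<times> d2) \<times> (d3 \<times> d4)) = 0"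
  proof (rule perspective_configuration[of "P (Suc i + k)" _ _ "P (Suc (Suc i + k))" _ _ "Q (Suc i + k)" l m])
    show "P (Suc i + k) \<bullet> d1 = 0" "P (Suc i + k) \<bullet> d3 = 0"
      "P (Suc (Suc i + k)) \<bullet> d2 = 0" "P (Suc (Suc i + k)) \<bullet> d4 = 0"
      "Q (Suc i + k) \<bullet> l = 0" "Q (Suc i + k) \<bullet> m = 0"
      "a \<bullet> l = 0" "b \<bullet> l = 0" "c \<bullet> m = 0" "e \<bullet> m = 0"
      unfolding d1_def d2_def d3_def d4_def l_def m_def abce by (simp_all add: dot_cross_self)
    show "Q (Suc i + k) \<bullet> (P (Suc i + k) \<times> P (Suc (Suc i + k))) = 0"
      using QP unfolding inscribed_def incident_def join_def by (simp add: inner_commute)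
    show "a \<bullet> d1 = 0" "b \<bullet> d2 = 0" "c \<bullet> d3 = 0" "e \<bullet> d4 = 0"
      using TQP[of i] TQP[of "Suc i"] TQP[of "i + k"] TQP[of "Suc i + k"]
      unfolding a_def b_def c_def e_def d1_def d2_def d3_def d4_def incident_def join_def
      by (simp_all add: inner_commute)
    show "d1 \<times> d2 \<noteq> 0" "d3 \<times> d4 \<noteq> 0"
      using TP(1)[of "Suc i"] TP(1)[of "Suc i + k"] unfolding d1_def d2_def d3_def d4_def Tk_cross
      by simp_all
    show "a \<times> b \<noteq> 0" "c \<times> e \<noteq> 0"
      using TQ(2)[of i] TQ(2)[of "i + k"] unfolding a_def b_def c_def e_def join_def by simp_all
    show "P (Suc i + k) \<noteq> 0" "P (Suc i + k) \<times> P (Suc (Suc i + k)) \<noteq> 0" "Q (Suc i + k) \<noteq> 0"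
      using generic_nonzero[OF P, of "Suc i + k"] generic_nonzero(1)[OF Q] unfolding join_def
      by simp_all
    show "l \<noteq> 0" "m \<noteq> 0"
      using TQ(1)[of i] TQ(1)[of "i + k"] unfolding a_def[symmetric] c_def[symmetric] abce by auto
  qed
  then show ?thesis
    unfolding a_def b_def c_def e_def d1_def d2_def d3_def d4_def incident_def join_def
      Tk_cross[of k "Tk k Q"] Tk_cross[of k P "Suc i"] Tk_cross[of k P "Suc i + k"]
    by (simp add: inner_commute)
qed

lemma inscribed_Tk_Tk:
  assumes "generic k P" "generic k Q" "inscribed Q P" "inscribed (Tk k Q) (Tk k P)"
  shows "inscribed (Tk k (Tk k Q)) (Tk k (Tk k P))"
proof -
  have "\<And>j. incident (Tk k Q j) (join (P (Suc j)) (P (Suc j + k)))"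
    using assms(4) inscribed_Tk_iff generic_nonzero(2)[OF generic_Tk[OF assms(1)]] by blast
  then show ?thesis
    using inscribed_Tk_iff Tk_Tk_on_diagonal assms(1-3)
      generic_nonzero(2)[OF generic_Tk[OF generic_Tk[OF assms(1)]]] by blast
qed

lemma inscribed_funpow_Tk:
  assumes "generic k P" "generic k Q" "inscribed Q P" "inscribed (Tk k Q) (Tk k P)"
  shows "inscribed ((Tk k ^^ m) Q) ((Tk k ^^ m) P)"
proof -
  have "inscribed ((Tk k ^^ m) Q) ((Tk k ^^ m) P) \<and> inscribed ((Tk k ^^ Suc m) Q) ((Tk k ^^ Suc m) P)"
  proof (induction m)
    case 0
    then show ?case
      using assms(3,4) by simp
  next
    case (Suc m)
    then show ?case
      using inscribed_Tk_Tk[OF generic_funpow_Tk[OF assms(1)] generic_funpow_Tk[OF assms(2)]] by simp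
  qed
  then show ?thesis ..
qed

end

theorem theorem6:
  fixes n k :: nat and P Q :: "nat \<Rightarrow> real^3"
  assumes "n \<ge> 5" and "2 \<le> k" and "k \<le> n - 2"
    and "ngon n P" and "ngon n Q"
    and "generic k P" and "generic k Q"
    and "inscribed Q P"
    and "inscribed (Tk k Q) (Tk k P)"
  shows "inscribed ((Tk k ^^ 2) Q) ((Tk k ^^ 2) P)
    \<and> (\<forall>m\<ge>1. inscribed ((Tk k ^^ m) Q) ((Tk k ^^ m) P))"
  using inscribed_funpow_Tk[OF assms(6-9)] by blast

end
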